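(* Any set of reflections of $G_7$ containing at least one element of each of $R'=R_1\cup R_1^{-1}$, $R''=R_2\cup R_2^{-1}$ and $S$ generates the entire group $G_7$.
   Context: Let $G_7$ be the subgroup of $GL_2(\mathbb{C})$ generated by $s=\begin{bmatrix}1&0\\0&-1\end{bmatrix}$, $t=\frac14\begin{bmatrix}(1+\sqrt3)+(-1+\sqrt3)i & (1+\sqrt3)+(-1+\sqrt3)i\\ (-1+\sqrt3)-(1+\sqrt3)i & (1-\sqrt3)+(1+\sqrt3)i\end{bmatrix}$ and $u=t^{\top}$ (presentation $\langle s,t,u\mid s^2=t^3=u^3=1,\ stu=ust=tus\rangle$, order $144$). A reflection is a linear map of $\mathbb{C}^2$ whose fixed space has dimension $1$. $G_7$ has $22$ reflections in five conjugacy classes: $S$ (class of $s$, six reflections of order $2$), $R_1$ (class of $t$), $R_2$ (class of $u$), $R_1^{-1}=\{r^{-1}:r\in R_1\}$ and $R_2^{-1}=\{r^{-1}:r\in R_2\}$, the last four each consisting of four reflections of order $3$. *)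

theory Defs
  imports "HOL-Analysis.Analysis"
begin

type_synonym cmat2 = "complex^2^2"

definition mat2 :: "complex \<Rightarrow> complex \<Rightarrow> complex \<Rightarrow> complex \<Rightarrow> cmat2" where
  "mat2 a b c d = (\<chi> i j. if i = (1::2) then (if j = (1::2) then a else b)
                            else (if j = (1::2) then c else d))"

definition gen_group :: "cmat2 set \<Rightarrow> cmat2 set" where
  "gen_group X = \<Inter>{H. X \<subseteq> H \<and> mat 1 \<in> H \<and> (\<forall>a\<in>H. \<forall>b\<in>H. a ** b \<in> H)
       \<and> (\<forall>a\<in>H. \<exists>b\<in>H. a ** b = mat 1 \<and> b ** a = mat 1)}"

definition s7 :: cmat2 where
  "s7 = mat2 1 0 0 (-1)"

definition t7 :: cmat2 where
  "t7 = mat2 ((1/4) * (Complex (1 + sqrt 3) (-1 + sqrt 3)))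
             ((1/4) * (Complex (1 + sqrt 3) (-1 + sqrt 3)))
             ((1/4) * (Complex (-1 + sqrt 3) (-(1 + sqrt 3))))
             ((1/4) * (Complex (1 - sqrt 3) (1 + sqrt 3)))"

definition u7 :: cmat2 where
  "u7 = transpose t7"

definition G7 :: "cmat2 set" where
  "G7 = gen_group {s7, t7, u7}"

definition is_reflection :: "cmat2 \<Rightarrow> bool" where
  "is_reflection A \<longleftrightarrow> vec.dim {v :: complex^2. A *v v = v} = 1"

definition reflections7 :: "cmat2 set" where
  "reflections7 = {r \<in> G7. is_reflection r}"

definition conj_class7 :: "cmat2 \<Rightarrow> cmat2 set" where
  "conj_class7 x = {g ** x ** h | g h. g \<in> G7 \<and> h \<in> G7 \<and> g ** h = mat 1}"

definition inv_set :: "cmat2 set \<Rightarrow> cmat2 set" where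
  "inv_set R = {r'. \<exists>r\<in>R. r ** r' = mat 1 \<and> r' ** r = mat 1}"

definition S7 :: "cmat2 set" where "S7 = conj_class7 s7"
definition R1 :: "cmat2 set" where "R1 = conj_class7 t7"
definition R2 :: "cmat2 set" where "R2 = conj_class7 u7"

end

theory Submission
  imports Defs
begin

text \<open>Every element of \<open>R\<^sub>1\<close> is conjugate to \<open>t\<close>, so after conjugating \<open>H = \<langle>X\<rangle>\<close> we may
  assume \<open>t \<in> H\<close>, while \<open>H\<close> still meets \<open>R\<^sub>2\<close> and \<open>S\<close>; an element of \<open>R\<^sub>i\<^sup>-\<^sup>1\<close> in \<open>X\<close>
  puts its inverse into \<open>H\<close>. The classes \<open>R\<^sub>2\<close> and \<open>S\<close> lie in explicit sets of 4 and 6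
  matrices that are stable under conjugation by \<open>s, t, u\<close>. For each of the 24 pairs
  \<open>(r, s')\<close> from these sets there are explicit words in \<open>t, r, s'\<close> equal to \<open>s\<close> and to \<open>u\<close>,
  so \<open>H\<close> contains all generators of \<open>G\<^sub>7\<close>. All matrix identities are checked by exact
  integer arithmetic in \<open>\<int>[\<surd>3, i]\<close>.\<close>

definition matrix_group :: "('a::field^'n^'n) set \<Rightarrow> bool" where
  "matrix_group H \<longleftrightarrow> mat 1 \<in> H \<and> (\<forall>a\<in>H. \<forall>b\<in>H. a ** b \<in> H) \<and> (\<forall>a\<in>H. \<exists>b\<in>H. a ** b = mat 1)"

lemma matrix_groupI:
  assumes "mat 1 \<in> H"
    and "\<And>a b. a \<in> H \<Longrightarrow> b \<in> H \<Longrightarrow> a ** b \<in> H"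
    and "\<And>a. a \<in> H \<Longrightarrow> \<exists>b\<in>H. a ** b = mat 1"
  shows "matrix_group H"
  using assms unfolding matrix_group_def by blast

lemma matrix_right_inverse_unique:
  fixes a b c :: "'a::field^'n^'n"
  assumes "a ** b = mat 1" and "a ** c = mat 1"
  shows "b = c"
proof -
  have "c ** a = mat 1" using assms(2) matrix_left_right_inverse by blast
  then have "b = (c ** a) ** b" by simp
  also have "\<dots> = c" by (simp add: assms(1) flip: matrix_mul_assoc)
  finally show ?thesis .
qed

lemma matrix_group_inverse_mem:
  assumes "matrix_group H" and "a \<in> H" and "a ** b = mat 1"
  shows "b \<in> H"
proof -
  obtain c where "c \<in> H" "a ** c = mat 1" using assms(1,2) unfolding matrix_group_def by blast
  with matrix_right_inverse_unique[OF assms(3)] show ?thesis by simp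
qed

lemma matrix_group_invertible: "matrix_group {A :: 'a::field^'n^'n. invertible A}"
proof (rule matrix_groupI)
  show "mat 1 \<in> {A :: 'a^'n^'n. invertible A}" unfolding invertible_def by force
  show "a ** b \<in> {A. invertible A}" if "a \<in> {A. invertible A}" "b \<in> {A. invertible A}"
    for a b :: "'a^'n^'n"
    using that invertible_mult by blast
  show "\<exists>b\<in>{A. invertible A}. a ** b = mat 1" if "a \<in> {A :: 'a^'n^'n. invertible A}" for a
    using that unfolding invertible_def by blast
qed

lemma matrix_group_subset_invertible: "matrix_group H \<Longrightarrow> H \<subseteq> {A. invertible A}"
  unfolding matrix_group_def invertible_right_inverse by blast

lemma matrix_group_foldr_mult:
  assumes "matrix_group H" and "set As \<subseteq> H"
  shows "foldr (**) As (mat 1) \<in> H"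
  using assms(2) by (induction As) (use assms(1) in \<open>auto simp: matrix_group_def\<close>)

lemma conj_mult:
  fixes g h a b :: "'a::semiring_1^'n^'n"
  assumes "h ** g = mat 1"
  shows "g ** (a ** b) ** h = (g ** a ** h) ** (g ** b ** h)"
proof -
  have "(g ** a ** h) ** (g ** b ** h) = g ** a ** (h ** g) ** b ** h"
    by (simp add: matrix_mul_assoc)
  with assms show ?thesis by (simp add: matrix_mul_assoc)
qed

lemma conj_cancel:
  fixes g h a :: "'a::semiring_1^'n^'n"
  assumes "h ** g = mat 1"
  shows "h ** (g ** a ** h) ** g = a"
proof -
  have "h ** (g ** a ** h) ** g = (h ** g) ** a ** (h ** g)"
    by (simp add: matrix_mul_assoc)
  with assms show ?thesis by simp
qed

lemma matrix_group_conj: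
  fixes g h :: "'a::field^'n^'n"
  assumes H: "matrix_group H" and gh: "g ** h = mat 1"
  shows "matrix_group {x. g ** x ** h \<in> H}"
proof (rule matrix_groupI; unfold mem_Collect_eq)
  have hg: "h ** g = mat 1" using gh matrix_left_right_inverse by blast
  show "g ** mat 1 ** h \<in> H" using H gh by (simp add: matrix_group_def)
  show "g ** (a ** b) ** h \<in> H" if "g ** a ** h \<in> H" "g ** b ** h \<in> H" for a b
    using that H by (simp add: conj_mult[OF hg] matrix_group_def)
  show "\<exists>b\<in>{x. g ** x ** h \<in> H}. a ** b = mat 1" if a: "g ** a ** h \<in> H" for a
  proof -
    obtain z where z: "z \<in> H" "(g ** a ** h) ** z = mat 1"
      using H a unfolding matrix_group_def by blast
    have z_conj: "g ** (h ** z ** g) ** h = z" by (rule conj_cancel[OF gh])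
    have "g ** (a ** (h ** z ** g)) ** h = (g ** a ** h) ** (g ** (h ** z ** g) ** h)"
      by (rule conj_mult[OF hg])
    also have "\<dots> = mat 1" using z(2) z_conj by simp
    finally have "a ** (h ** z ** g) = mat 1"
      using conj_cancel[OF hg, of "a ** (h ** z ** g)"] hg by simp
    moreover have "g ** (h ** z ** g) ** h \<in> H" using z(1) z_conj by simp
    ultimately show ?thesis by blast
  qed
qed

text \<open>Both conjugation directions are required, so that the normalizer of an infinite set is
  closed under inverses as well.\<close>

definition normalizer :: "('a::field^'n^'n) set \<Rightarrow> ('a^'n^'n) set" where
  "normalizer N = {g. \<exists>h. g ** h = mat 1 \<and> (\<forall>x\<in>N. g ** x ** h \<in> N \<and> h ** x ** g \<in> N)}"

lemma normalizer_conj_mem: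
  assumes "g \<in> normalizer N" and "g ** h = mat 1" and "x \<in> N"
  shows "g ** x ** h \<in> N"
  using assms matrix_right_inverse_unique unfolding normalizer_def by blast

lemma matrix_group_normalizer: "matrix_group (normalizer N)"
proof (rule matrix_groupI)
  show "mat 1 \<in> normalizer N" unfolding normalizer_def by force
  fix a assume "a \<in> normalizer N"
  then obtain a' where a': "a ** a' = mat 1" "\<forall>x\<in>N. a ** x ** a' \<in> N \<and> a' ** x ** a \<in> N"
    unfolding normalizer_def by blast
  have "a' ** a = mat 1" using a'(1) matrix_left_right_inverse by blast
  with a' have "a' \<in> normalizer N" unfolding normalizer_def by blast
  with a'(1) show "\<exists>b\<in>normalizer N. a ** b = mat 1" by blast
  fix b assume "b \<in> normalizer N"
  then obtain b' where b': "b ** b' = mat 1" "\<forall>x\<in>N. b ** x ** b' \<in> N \<and> b' ** x ** b \<in> N"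
    unfolding normalizer_def by blast
  have "a ** b ** (b' ** a') = a ** (b ** b') ** a'"
    and "a ** b ** x ** (b' ** a') = a ** (b ** x ** b') ** a'"
    and "b' ** a' ** x ** (a ** b) = b' ** (a' ** x ** a) ** b" for x
    by (simp_all add: matrix_mul_assoc)
  with a' b' show "a ** b \<in> normalizer N" unfolding normalizer_def by auto
qed

lemma gen_group_eq: "gen_group X = \<Inter>{H. X \<subseteq> H \<and> matrix_group H}"
proof -
  have "(a ** b = mat 1 \<and> b ** a = mat 1) \<longleftrightarrow> a ** b = mat 1" for a b :: cmat2
    using matrix_left_right_inverse by blast
  then show ?thesis unfolding gen_group_def matrix_group_def by simp
qed

lemma gen_group_least: "X \<subseteq> H \<Longrightarrow> matrix_group H \<Longrightarrow> gen_group X \<subseteq> H"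
  unfolding gen_group_eq by blast

lemma gen_group_superset: "X \<subseteq> gen_group X"
  unfolding gen_group_eq by blast

lemma matrix_group_gen_group:
  assumes "X \<subseteq> {A. invertible A}"
  shows "matrix_group (gen_group X)"
proof (rule matrix_groupI)
  show "mat 1 \<in> gen_group X" unfolding gen_group_eq matrix_group_def by blast
  show "a ** b \<in> gen_group X" if "a \<in> gen_group X" "b \<in> gen_group X" for a b
    using that unfolding gen_group_eq matrix_group_def by blast
  show "\<exists>b\<in>gen_group X. a ** b = mat 1" if a: "a \<in> gen_group X" for a
  proof -
    have "invertible a" using a assms matrix_group_invertible unfolding gen_group_eq by blast
    then obtain b where b: "a ** b = mat 1" unfolding invertible_def by blast
    have "b \<in> gen_group X" using a b matrix_group_inverse_mem unfolding gen_group_eq by blast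
    with b show ?thesis by blast
  qed
qed

text \<open>A quadruple \<open>(a, b, c, d)\<close> stands for \<open>(a + b\<surd>3) + (c + d\<surd>3)i\<close>; a matrix over these,
  together with an exponent \<open>n\<close>, stands for the complex matrix \<open>4\<^sup>-\<^sup>n A\<close>.\<close>

type_synonym zr3i = "int \<times> int \<times> int \<times> int"

fun complex_of_zr3i :: "zr3i \<Rightarrow> complex" where
  "complex_of_zr3i (a, b, c, d) = Complex (of_int a + of_int b * sqrt 3) (of_int c + of_int d * sqrt 3)"

fun zr3i_add :: "zr3i \<Rightarrow> zr3i \<Rightarrow> zr3i" where
  "zr3i_add (a, b, c, d) (e, f, g, h) = (a + e, b + f, c + g, d + h)"

fun zr3i_mul :: "zr3i \<Rightarrow> zr3i \<Rightarrow> zr3i" where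
  "zr3i_mul (a, b, c, d) (e, f, g, h) =
     (a*e + 3*b*f - c*g - 3*d*h, a*f + b*e - c*h - d*g, a*g + 3*b*h + c*e + 3*d*f, a*h + b*g + c*f + d*e)"

fun zr3i_scale :: "int \<Rightarrow> zr3i \<Rightarrow> zr3i" where
  "zr3i_scale k (a, b, c, d) = (k*a, k*b, k*c, k*d)"

lemma complex_of_zr3i_add: "complex_of_zr3i (zr3i_add x y) = complex_of_zr3i x + complex_of_zr3i y"
  by (cases x; cases y) (simp add: complex_eq_iff algebra_simps)

lemma complex_of_zr3i_mul: "complex_of_zr3i (zr3i_mul x y) = complex_of_zr3i x * complex_of_zr3i y"
proof -
  have sqrt3: "sqrt 3 * sqrt 3 = (3::real)" by simp
  show ?thesis by (cases x; cases y) (simp add: complex_eq_iff algebra_simps sqrt3)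
qed

lemma complex_of_zr3i_scale: "complex_of_zr3i (zr3i_scale k x) = of_int k * complex_of_zr3i x"
  by (cases x) (simp add: complex_eq_iff algebra_simps)

type_synonym zr3i_mat = "zr3i \<times> zr3i \<times> zr3i \<times> zr3i"

fun zmat_mul :: "zr3i_mat \<Rightarrow> zr3i_mat \<Rightarrow> zr3i_mat" where
  "zmat_mul (a, b, c, d) (e, f, g, h) =
     (zr3i_add (zr3i_mul a e) (zr3i_mul b g), zr3i_add (zr3i_mul a f) (zr3i_mul b h),
      zr3i_add (zr3i_mul c e) (zr3i_mul d g), zr3i_add (zr3i_mul c f) (zr3i_mul d h))"

fun zmat_scale :: "int \<Rightarrow> zr3i_mat \<Rightarrow> zr3i_mat" where
  "zmat_scale k (a, b, c, d) = (zr3i_scale k a, zr3i_scale k b, zr3i_scale k c, zr3i_scale k d)"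

definition zmat_one :: zr3i_mat where
  "zmat_one = ((1, 0, 0, 0), (0, 0, 0, 0), (0, 0, 0, 0), (1, 0, 0, 0))"

definition zmat_prod :: "zr3i_mat list \<Rightarrow> zr3i_mat" where
  "zmat_prod As = foldr zmat_mul As zmat_one"

fun cmat_of_zmat :: "nat \<Rightarrow> zr3i_mat \<Rightarrow> cmat2" where
  "cmat_of_zmat n (a, b, c, d) = mat2 (complex_of_zr3i a / 4^n) (complex_of_zr3i b / 4^n)
     (complex_of_zr3i c / 4^n) (complex_of_zr3i d / 4^n)"

lemma mat2_mult: "mat2 a b c d ** mat2 e f g h = mat2 (a*e + b*g) (a*f + b*h) (c*e + d*g) (c*f + d*h)"
  by (simp add: mat2_def matrix_matrix_mult_def vec_eq_iff forall_2 sum_2)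

lemma mat2_one: "mat 1 = mat2 1 0 0 1"
  by (simp add: mat2_def mat_def vec_eq_iff forall_2)

lemma cmat_of_zmat_mult:
  "cmat_of_zmat m A ** cmat_of_zmat n B = cmat_of_zmat (m + n) (zmat_mul A B)"
  by (cases A rule: prod_cases4; cases B rule: prod_cases4)
    (simp add: mat2_mult complex_of_zr3i_add complex_of_zr3i_mul power_add add_divide_distrib)

lemma cmat_of_zmat_scale: "cmat_of_zmat (k + n) (zmat_scale (4^k) A) = cmat_of_zmat n A"
  by (cases A rule: prod_cases4) (simp add: complex_of_zr3i_scale power_add del: complex_of_zr3i.simps)

lemma cmat_of_zmat_one: "cmat_of_zmat 0 zmat_one = mat 1"
  by (simp add: zmat_one_def mat2_one one_complex.code[symmetric] zero_complex.code[symmetric])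

lemma cmat_of_zmat_prod:
  "cmat_of_zmat (length As) (zmat_prod As) = foldr (**) (map (cmat_of_zmat 1) As) (mat 1)"
proof (induction As)
  case Nil
  then show ?case by (simp add: zmat_prod_def cmat_of_zmat_one)
next
  case (Cons A As)
  have "cmat_of_zmat (length (A # As)) (zmat_prod (A # As))
      = cmat_of_zmat 1 A ** cmat_of_zmat (length As) (zmat_prod As)"
    by (simp add: zmat_prod_def cmat_of_zmat_mult del: cmat_of_zmat.simps)
  with Cons.IH show ?case by simp
qed

lemma cmat_of_zmat_eq_one:
  assumes "A = zmat_scale (4^n) zmat_one"
  shows "cmat_of_zmat n A = mat 1"
  using cmat_of_zmat_scale[of n 0 zmat_one] by (simp add: assms cmat_of_zmat_one del: cmat_of_zmat.simps)

definition s7_zmat :: zr3i_mat where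
  "s7_zmat = ((1, 0, 0, 0), (0, 0, 0, 0), (0, 0, 0, 0), (-1, 0, 0, 0))"

definition t7_zmat :: zr3i_mat where
  "t7_zmat = ((1, 1, -1, 1), (1, 1, -1, 1), (-1, 1, -1, -1), (1, -1, 1, 1))"

definition u7_zmat :: zr3i_mat where
  "u7_zmat = ((1, 1, -1, 1), (-1, 1, -1, -1), (1, 1, -1, 1), (1, -1, 1, 1))"

lemma s7_eq: "s7 = cmat_of_zmat 0 s7_zmat"
proof -
  have "Complex (-1) 0 = -1" by (simp add: complex_eq_iff)
  then show ?thesis by (simp add: s7_def s7_zmat_def one_complex.code[symmetric] zero_complex.code[symmetric])
qed

lemma t7_eq: "t7 = cmat_of_zmat 1 t7_zmat"
  by (simp add: t7_def t7_zmat_def)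

lemma u7_eq: "u7 = cmat_of_zmat 1 u7_zmat"
  by (simp add: u7_def t7_eq t7_zmat_def u7_zmat_def transpose_def mat2_def vec_eq_iff forall_2)

lemma s7_order: "s7 ** s7 = mat 1"
  unfolding s7_eq cmat_of_zmat_mult by (rule cmat_of_zmat_eq_one) code_simp

lemma t7_order: "t7 ** (t7 ** t7) = mat 1"
  unfolding t7_eq cmat_of_zmat_mult by (rule cmat_of_zmat_eq_one) code_simp

lemma u7_order: "u7 ** (u7 ** u7) = mat 1"
  unfolding u7_eq cmat_of_zmat_mult by (rule cmat_of_zmat_eq_one) code_simp

lemma matrix_group_G7: "matrix_group G7"
  unfolding G7_def
  using s7_order t7_order u7_order by (intro matrix_group_gen_group) (auto simp: invertible_right_inverse)

lemma G7_least:
  assumes "matrix_group H" and "s7 \<in> H" "t7 \<in> H" "u7 \<in> H"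
  shows "G7 \<subseteq> H"
  using assms unfolding G7_def by (simp add: gen_group_least)

lemma conj_class7_conj:
  assumes "x \<in> conj_class7 y" and "g \<in> G7" and "g ** h = mat 1"
  shows "g ** x ** h \<in> conj_class7 y"
proof -
  obtain a b where x: "x = a ** y ** b" and ab: "a \<in> G7" "b \<in> G7" "a ** b = mat 1"
    using assms(1) unfolding conj_class7_def by blast
  have "h \<in> G7" using matrix_group_G7 assms(2,3) by (rule matrix_group_inverse_mem)
  then have "g ** a \<in> G7" "b ** h \<in> G7"
    using matrix_group_G7 ab assms(2) unfolding matrix_group_def by blast+
  moreover have "(g ** a) ** (b ** h) = mat 1"
    using ab(3) assms(3) by (simp add: matrix_mul_assoc flip: matrix_mul_assoc[of g])
  moreover have "g ** x ** h = (g ** a) ** y ** (b ** h)"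
    unfolding x by (simp add: matrix_mul_assoc)
  ultimately show ?thesis unfolding conj_class7_def by blast
qed

lemma conj_class7_subset:
  assumes "G7 \<subseteq> normalizer N" and "x \<in> N"
  shows "conj_class7 x \<subseteq> N"
  using assms normalizer_conj_mem unfolding conj_class7_def by blast

definition zmat_conj_closed :: "zr3i_mat \<Rightarrow> zr3i_mat \<Rightarrow> nat \<Rightarrow> zr3i_mat list \<Rightarrow> bool" where
  "zmat_conj_closed G G' k L \<longleftrightarrow> (\<forall>A\<in>set L.
     zmat_mul (zmat_mul G A) G' \<in> zmat_scale (4^k) ` set L \<and> zmat_mul (zmat_mul G' A) G \<in> zmat_scale (4^k) ` set L)"

lemma cmat_of_zmat_mem_normalizer:
  assumes closed: "zmat_conj_closed G G' (m + n) L"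
    and inverse: "cmat_of_zmat m G ** cmat_of_zmat n G' = mat 1"
  shows "cmat_of_zmat m G \<in> normalizer (cmat_of_zmat 1 ` set L)"
proof -
  have conj_mem: "cmat_of_zmat (m + 1 + n) (zmat_mul (zmat_mul G A) G') \<in> cmat_of_zmat 1 ` set L"
    "cmat_of_zmat (n + 1 + m) (zmat_mul (zmat_mul G' A) G) \<in> cmat_of_zmat 1 ` set L"
    if "A \<in> set L" for A
    using closed that cmat_of_zmat_scale[of "m + n" 1]
    unfolding zmat_conj_closed_def by (auto simp: ac_simps simp del: cmat_of_zmat.simps)
  show ?thesis
    unfolding normalizer_def mem_Collect_eq
  proof (intro exI conjI ballI)
    show "cmat_of_zmat m G ** cmat_of_zmat n G' = mat 1" by (fact inverse)
    fix x assume "x \<in> cmat_of_zmat 1 ` set L"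
    then obtain A where "A \<in> set L" "x = cmat_of_zmat 1 A" by blast
    then show "cmat_of_zmat m G ** x ** cmat_of_zmat n G' \<in> cmat_of_zmat 1 ` set L"
      and "cmat_of_zmat n G' ** x ** cmat_of_zmat m G \<in> cmat_of_zmat 1 ` set L"
      using conj_mem by (simp_all add: cmat_of_zmat_mult del: cmat_of_zmat.simps)
  qed
qed

lemma G7_subset_normalizer:
  assumes "zmat_conj_closed s7_zmat s7_zmat 0 L"
    and "zmat_conj_closed t7_zmat (zmat_mul t7_zmat t7_zmat) 3 L"
    and "zmat_conj_closed u7_zmat (zmat_mul u7_zmat u7_zmat) 3 L"
  shows "G7 \<subseteq> normalizer (cmat_of_zmat 1 ` set L)"
proof (rule G7_least[OF matrix_group_normalizer])
  show "s7 \<in> normalizer (cmat_of_zmat 1 ` set L)"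
    using cmat_of_zmat_mem_normalizer[of s7_zmat s7_zmat 0 0] assms(1) s7_order s7_eq by simp
  show "t7 \<in> normalizer (cmat_of_zmat 1 ` set L)"
    using cmat_of_zmat_mem_normalizer[of t7_zmat _ 1 2] assms(2) t7_order
    by (simp add: t7_eq cmat_of_zmat_mult numeral_3_eq_3 del: cmat_of_zmat.simps)
  show "u7 \<in> normalizer (cmat_of_zmat 1 ` set L)"
    using cmat_of_zmat_mem_normalizer[of u7_zmat _ 1 2] assms(3) u7_order
    by (simp add: u7_eq cmat_of_zmat_mult numeral_3_eq_3 del: cmat_of_zmat.simps)
qed

definition R2_zmats :: "zr3i_mat list" where
  "R2_zmats =
    [((1, -1, 1, 1), (-1, -1, 1, -1), (1, -1, 1, 1), (1, 1, -1, 1)),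
     ((1, -1, 1, 1), (1, 1, -1, 1), (-1, 1, -1, -1), (1, 1, -1, 1)),
     ((1, 1, -1, 1), (-1, 1, -1, -1), (1, 1, -1, 1), (1, -1, 1, 1)),
     ((1, 1, -1, 1), (1, -1, 1, 1), (-1, -1, 1, -1), (1, -1, 1, 1))]"

definition S7_zmats :: "zr3i_mat list" where
  "S7_zmats =
    [((-4, 0, 0, 0), (0, 0, 0, 0), (0, 0, 0, 0), (4, 0, 0, 0)),
     ((0, 0, 0, 0), (-4, 0, 0, 0), (-4, 0, 0, 0), (0, 0, 0, 0)),
     ((0, 0, 0, 0), (0, 0, -4, 0), (0, 0, 4, 0), (0, 0, 0, 0)),
     ((0, 0, 0, 0), (0, 0, 4, 0), (0, 0, -4, 0), (0, 0, 0, 0)),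
     ((0, 0, 0, 0), (4, 0, 0, 0), (4, 0, 0, 0), (0, 0, 0, 0)),
     ((4, 0, 0, 0), (0, 0, 0, 0), (0, 0, 0, 0), (-4, 0, 0, 0))]"

lemma R2_subset: "R2 \<subseteq> cmat_of_zmat 1 ` set R2_zmats"
proof -
  have "G7 \<subseteq> normalizer (cmat_of_zmat 1 ` set R2_zmats)"
    by (rule G7_subset_normalizer) code_simp+
  moreover have "u7 \<in> cmat_of_zmat 1 ` set R2_zmats"
    unfolding u7_eq by (rule imageI) code_simp
  ultimately show ?thesis unfolding R2_def by (rule conj_class7_subset)
qed

lemma S7_subset: "S7 \<subseteq> cmat_of_zmat 1 ` set S7_zmats"
proof -
  have "G7 \<subseteq> normalizer (cmat_of_zmat 1 ` set S7_zmats)"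
    by (rule G7_subset_normalizer) code_simp+
  moreover have "s7 \<in> cmat_of_zmat 1 ` set S7_zmats"
  proof -
    have "s7 = cmat_of_zmat 1 (zmat_scale 4 s7_zmat)"
      using cmat_of_zmat_scale[of 1 0 s7_zmat] s7_eq by simp
    moreover have "zmat_scale 4 s7_zmat \<in> set S7_zmats" by code_simp
    ultimately show ?thesis by blast
  qed
  ultimately show ?thesis unfolding S7_def by (rule conj_class7_subset)
qed

definition word_represents :: "zr3i_mat list \<Rightarrow> nat list \<Rightarrow> nat \<Rightarrow> zr3i_mat \<Rightarrow> bool" where
  "word_represents gs w n T \<longleftrightarrow> (\<forall>k\<in>set w. k < length gs) \<and> n \<le> length w \<and>
     zmat_prod (map ((!) gs) w) = zmat_scale (4 ^ (length w - n)) T"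

lemma word_represents_mem:
  assumes H: "matrix_group H" and w: "word_represents gs w n T"
    and letters: "\<And>k. k < length gs \<Longrightarrow> cmat_of_zmat 1 (gs ! k) \<in> H"
  shows "cmat_of_zmat n T \<in> H"
proof -
  have "cmat_of_zmat n T = cmat_of_zmat (length w - n + n) (zmat_scale (4 ^ (length w - n)) T)"
    by (rule cmat_of_zmat_scale[symmetric])
  also have "\<dots> = foldr (**) (map (cmat_of_zmat 1) (map ((!) gs) w)) (mat 1)"
    using w cmat_of_zmat_prod[of "map ((!) gs) w"] unfolding word_represents_def by simp
  also have "\<dots> \<in> H"
    using w letters unfolding word_represents_def by (intro matrix_group_foldr_mult[OF H]) auto
  finally show ?thesis .
qed

text \<open>Entry \<open>j\<close> of row \<open>i\<close> is a pair of words in the letters \<open>0 = t\<close>, \<open>1 = r\<close>, \<open>2 = s\<close>, where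
  \<open>r\<close> and \<open>s\<close> are the \<open>i\<close>-th element of \<open>R2_zmats\<close> and the \<open>j\<close>-th of \<open>S7_zmats\<close>;
  the words evaluate to \<open>s\<^sub>7\<close> and \<open>u\<^sub>7\<close>.\<close>

definition generating_words :: "(nat list \<times> nat list) list list" where
  "generating_words =
    [[([0, 0, 1, 2, 1, 2, 0, 2, 1], [0, 2, 0, 0, 2, 1]),
      ([2, 0, 2, 0, 0, 2], [0, 0, 2, 1, 2, 0]),
      ([2, 0, 0, 2, 0, 2], [2, 1, 2]),
      ([0, 0, 2, 0], [2, 1, 2]),
      ([0, 2, 0, 0], [0, 0, 2, 1, 2, 0]),
      ([2], [0, 2, 0, 0, 2, 1])],
     [([0, 0, 1, 0, 1, 2, 1], [0, 1, 0, 0]),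
      ([1, 1, 2, 1], [2, 1, 2]),
      ([1, 2, 1, 1], [0, 1, 0, 0]),
      ([0, 0, 2, 0], [0, 1, 0, 0]),
      ([0, 2, 0, 0], [2, 1, 2]),
      ([2], [0, 1, 0, 0])],
     [([0, 0, 1, 1, 2, 1, 0], [1]),
      ([2, 0, 2, 0, 0, 2], [1]),
      ([1, 2, 1, 1], [1]),
      ([0, 0, 2, 0], [1]),
      ([0, 2, 0, 0], [1]),
      ([2], [1])],
     [([0, 1, 0, 0, 1, 2, 1], [2, 1, 2]),
      ([1, 1, 2, 1], [0, 0, 1, 0]),
      ([2, 0, 0, 2, 0, 2], [0, 0, 1, 0]),
      ([0, 0, 2, 0], [0, 0, 1, 0]),
      ([0, 2, 0, 0], [0, 0, 1, 0]),
      ([2], [2, 1, 2])]]"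

lemma generating_words_correct:
  "list_all2 (\<lambda>R. list_all2 (\<lambda>S (v, w).
       word_represents [t7_zmat, R, S] v 0 s7_zmat \<and> word_represents [t7_zmat, R, S] w 1 u7_zmat)
     S7_zmats) R2_zmats generating_words"
  by code_simp

lemma G7_subset_if_t7_mem:
  assumes H: "matrix_group H" and t7: "t7 \<in> H" and "r \<in> R2 \<inter> H" and "s \<in> S7 \<inter> H"
  shows "G7 \<subseteq> H"
proof -
  obtain R S where R: "R \<in> set R2_zmats" "cmat_of_zmat 1 R \<in> H"
    and S: "S \<in> set S7_zmats" "cmat_of_zmat 1 S \<in> H"
    using assms(3,4) R2_subset S7_subset by blast
  obtain v w where "word_represents [t7_zmat, R, S] v 0 s7_zmat" "word_represents [t7_zmat, R, S] w 1 u7_zmat"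
    using generating_words_correct R(1) S(1)
    by (fastforce simp: list_all2_conv_all_nth in_set_conv_nth)
  moreover have "cmat_of_zmat 1 ([t7_zmat, R, S] ! k) \<in> H" if "k < length [t7_zmat, R, S]" for k
    using that t7 R(2) S(2) unfolding t7_eq by (auto simp: less_Suc_eq simp del: cmat_of_zmat.simps)
  ultimately have "s7 \<in> H" "u7 \<in> H"
    unfolding s7_eq u7_eq by (auto intro: word_represents_mem[OF H] simp del: cmat_of_zmat.simps)
  with G7_least[OF H _ t7] show ?thesis by blast
qed

lemma G7_subset_if_meets_classes:
  assumes H: "matrix_group H" and "R1 \<inter> H \<noteq> {}" "R2 \<inter> H \<noteq> {}" "S7 \<inter> H \<noteq> {}"
  shows "G7 \<subseteq> H"
proof -
  obtain g h where g: "g \<in> G7" and gh: "g ** h = mat 1" and "g ** t7 ** h \<in> H"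
    using assms(2) unfolding R1_def conj_class7_def by blast
  have hg: "h ** g = mat 1" using gh matrix_left_right_inverse by blast
  have h: "h \<in> G7" using matrix_group_G7 g gh by (rule matrix_group_inverse_mem)
  have conj_back: "g ** (h ** x ** g) ** h = x" for x by (rule conj_cancel[OF gh])
  obtain r s where r: "r \<in> R2" "r \<in> H" and s: "s \<in> S7" "s \<in> H" using assms(3,4) by blast
  have "G7 \<subseteq> {x. g ** x ** h \<in> H}"
  proof (rule G7_subset_if_t7_mem)
    show "matrix_group {x. g ** x ** h \<in> H}" using H gh by (rule matrix_group_conj)
    show "t7 \<in> {x. g ** x ** h \<in> H}" by (simp add: \<open>g ** t7 ** h \<in> H\<close>)
    have "h ** r ** g \<in> R2" using conj_class7_conj[OF _ h hg] r(1) unfolding R2_def .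
    then show "h ** r ** g \<in> R2 \<inter> {x. g ** x ** h \<in> H}" by (simp add: conj_back r(2))
    have "h ** s ** g \<in> S7" using conj_class7_conj[OF _ h hg] s(1) unfolding S7_def .
    then show "h ** s ** g \<in> S7 \<inter> {x. g ** x ** h \<in> H}" by (simp add: conj_back s(2))
  qed
  show ?thesis
  proof
    fix y assume "y \<in> G7"
    then have "h ** y ** g \<in> G7"
      using matrix_group_G7 g h unfolding matrix_group_def by blast
    with \<open>G7 \<subseteq> {x. g ** x ** h \<in> H}\<close> show "y \<in> H" by (auto simp only: conj_back)
  qed
qed

lemma meets_if_meets_Un_inv_set:
  assumes H: "matrix_group H" and "X \<subseteq> H" and "X \<inter> (R \<union> inv_set R) \<noteq> {}"
  shows "R \<inter> H \<noteq> {}"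
proof -
  obtain x where x: "x \<in> X" "x \<in> R \<union> inv_set R" using assms(3) by blast
  show ?thesis
  proof (cases "x \<in> R")
    case True
    with x assms(2) show ?thesis by blast
  next
    case False
    with x obtain r where "r \<in> R" "x ** r = mat 1" unfolding inv_set_def by blast
    with H x(1) assms(2) show ?thesis using matrix_group_inverse_mem by blast
  qed
qed

theorem proposition3p15:
  fixes X :: "cmat2 set"
  assumes "X \<subseteq> reflections7"
    and "X \<inter> (R1 \<union> inv_set R1) \<noteq> {}"
    and "X \<inter> (R2 \<union> inv_set R2) \<noteq> {}"
    and "X \<inter> S7 \<noteq> {}"
  shows "gen_group X = G7"
proof
  have "X \<subseteq> G7" using assms(1) unfolding reflections7_def by blast
  then show "gen_group X \<subseteq> G7" using matrix_group_G7 by (rule gen_group_least)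
  have H: "matrix_group (gen_group X)"
    using \<open>X \<subseteq> G7\<close> matrix_group_subset_invertible[OF matrix_group_G7]
    by (intro matrix_group_gen_group) (rule order_trans)
  have X: "X \<subseteq> gen_group X" by (rule gen_group_superset)
  show "G7 \<subseteq> gen_group X"
  proof (rule G7_subset_if_meets_classes[OF H])
    show "R1 \<inter> gen_group X \<noteq> {}" using H X assms(2) by (rule meets_if_meets_Un_inv_set)
    show "R2 \<inter> gen_group X \<noteq> {}" using H X assms(3) by (rule meets_if_meets_Un_inv_set)
    show "S7 \<inter> gen_group X \<noteq> {}" using X assms(4) by blast
  qed
qed

end
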